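(* Let $G$ be a graph with vertex set $V=\{v_1,\dots,v_n\}$, and let $G^+$ be the graph with vertex set $V\cup\{v_1^+,\dots,v_n^+\}$ (where the $v_i^+$ are new vertices) and edge set $E(G)\cup\{v_iv_i^+: i=1,\dots,n\}$. Then $G$ is a path graph if and only if $G^+$ is a path graph.
   Context: A graph is a path graph if there are a tree $T$, a collection $\mathcal P$ of paths of $T$ and a bijection $\phi$ from the vertex set of the graph onto $\mathcal P$ such that two vertices $u,v$ are adjacent iff the vertex sets of $\phi(u)$ and $\phi(v)$ intersect. *)

theory Defs
  imports Main
begin

definition graph :: "'a set \<Rightarrow> 'a set set \<Rightarrow> bool" where
  "graph V E \<equiv> finite V \<and> (\<forall>e\<in>E. e \<subseteq> V \<and> card e = 2)"

definition is_path :: "'a set \<Rightarrow> 'a set set \<Rightarrow> 'a list \<Rightarrow> bool" where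
  "is_path V E xs \<equiv> xs \<noteq> [] \<and> distinct xs \<and> set xs \<subseteq> V \<and>
     (\<forall>i. Suc i < length xs \<longrightarrow> {xs ! i, xs ! Suc i} \<in> E)"

definition connected_graph :: "'a set \<Rightarrow> 'a set set \<Rightarrow> bool" where
  "connected_graph V E \<equiv> \<forall>x\<in>V. \<forall>y\<in>V. \<exists>xs. is_path V E xs \<and> hd xs = x \<and> last xs = y"

definition is_cycle :: "'a set \<Rightarrow> 'a set set \<Rightarrow> 'a list \<Rightarrow> bool" where
  "is_cycle V E xs \<equiv> 3 \<le> length xs \<and> is_path V E xs \<and> {last xs, hd xs} \<in> E"

definition tree :: "'a set \<Rightarrow> 'a set set \<Rightarrow> bool" where
  "tree V E \<equiv> graph V E \<and> V \<noteq> {} \<and> connected_graph V E \<and> \<not> (\<exists>xs. is_cycle V E xs)"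

text \<open>Path graph: there are a tree T (w.l.o.g. on natural-number vertices), a collection of
  paths of T (each path represented by its vertex set) and a bijection phi from V onto
  that collection such that distinct u, v are adjacent iff phi u and phi v intersect.\<close>
definition path_graph :: "'a set \<Rightarrow> 'a set set \<Rightarrow> bool" where
  "path_graph V E \<equiv> \<exists>(TV :: nat set) TE (\<phi> :: 'a \<Rightarrow> nat set).
     tree TV TE \<and> inj_on \<phi> V \<and>
     (\<forall>v\<in>V. \<exists>ps. is_path TV TE ps \<and> set ps = \<phi> v) \<and>
     (\<forall>u\<in>V. \<forall>v\<in>V. u \<noteq> v \<longrightarrow> ({u, v} \<in> E \<longleftrightarrow> \<phi> u \<inter> \<phi> v \<noteq> {}))"

text \<open>G^+: vertices Inl v (old) and Inr v (the new pendant v^+), edges E plus {v, v^+}.\<close>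
definition plus_V :: "'a set \<Rightarrow> ('a + 'a) set" where
  "plus_V V = Inl ` V \<union> Inr ` V"

definition plus_E :: "'a set \<Rightarrow> 'a set set \<Rightarrow> ('a + 'a) set set" where
  "plus_E V E = (\<lambda>e. Inl ` e) ` E \<union> {{Inl v, Inr v} | v. v \<in> V}"

end

theory Submission
  imports Defs
begin

text \<open>If \<open>\<phi>\<close> represents \<open>G\<^sup>+\<close> by paths of a tree, its restriction to the old vertices
  represents \<open>G\<close>, since \<open>G\<close> is an induced subgraph of \<open>G\<^sup>+\<close>. Conversely, given paths
  \<open>\<phi> v\<close> of a tree \<open>T\<close> representing \<open>G\<close>, attach a new leaf \<open>l v\<close> to an end of each path
  \<open>\<phi> v\<close>. The result is still a tree, \<open>\<phi> v\<close> extended by \<open>l v\<close> is a path representing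
  \<open>v\<close>, and the one-vertex path \<open>l v\<close> represents \<open>v\<^sup>+\<close>. As \<open>l v\<close> lies on the paths of \<open>v\<close>
  and \<open>v\<^sup>+\<close> only, the intersection pattern is exactly that of \<open>G\<^sup>+\<close>.\<close>

lemma is_path_mono:
  "is_path V E xs \<Longrightarrow> V \<subseteq> V' \<Longrightarrow> E \<subseteq> E' \<Longrightarrow> is_path V' E' xs"
  unfolding is_path_def by blast

lemma is_path_Cons:
  assumes "is_path V E xs" "x \<in> V" "x \<notin> set xs" "{x, hd xs} \<in> E"
  shows "is_path V E (x # xs)"
proof -
  have "{(x # xs) ! i, (x # xs) ! Suc i} \<in> E" if "Suc i < length (x # xs)" for i
  proof (cases i)
    case 0
    then show ?thesis using assms(1,4) by (simp add: is_path_def hd_conv_nth)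
  next
    case (Suc j)
    then show ?thesis using assms(1) that by (simp add: is_path_def)
  qed
  then show ?thesis using assms unfolding is_path_def by auto
qed

lemma is_path_rev:
  assumes "is_path V E xs"
  shows "is_path V E (rev xs)"
proof -
  have "{rev xs ! i, rev xs ! Suc i} \<in> E" if i: "Suc i < length xs" for i
  proof -
    define j where "j = length xs - Suc (Suc i)"
    have j: "Suc j < length xs" "length xs - Suc i = Suc j" using i unfolding j_def by auto
    then have "{xs ! j, xs ! Suc j} \<in> E" using assms unfolding is_path_def by auto
    then show ?thesis using i j by (simp add: rev_nth j_def insert_commute)
  qed
  then show ?thesis using assms unfolding is_path_def by auto
qed

lemma is_path_without_leaf:
  assumes path: "is_path (insert l V) (insert {a, l} E) xs" and l: "l \<notin> set xs"
  shows "is_path V E xs"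
proof -
  have "{xs ! i, xs ! Suc i} \<in> E" if i: "Suc i < length xs" for i
  proof -
    have "xs ! i \<noteq> l" "xs ! Suc i \<noteq> l" using l i nth_mem[of i xs] nth_mem[of "Suc i" xs] by auto
    then have "{xs ! i, xs ! Suc i} \<noteq> {a, l}" by (auto simp: doubleton_eq_iff)
    moreover have "{xs ! i, xs ! Suc i} \<in> insert {a, l} E" using path i unfolding is_path_def by blast
    ultimately show ?thesis by blast
  qed
  then show ?thesis using path l unfolding is_path_def by auto
qed

lemma connected_graph_add_leaf:
  assumes con: "connected_graph V E" and a: "a \<in> V" and l: "l \<notin> V"
  shows "connected_graph (insert l V) (insert {a, l} E)"
proof -
  let ?V = "insert l V" and ?E = "insert {a, l} E"
  have old: "\<exists>xs. is_path ?V ?E xs \<and> hd xs = x \<and> last xs = y" if "x \<in> V" "y \<in> V" for x y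
    using con that is_path_mono[of V E _ ?V ?E] unfolding connected_graph_def by blast
  have from_leaf: "is_path ?V ?E (l # xs) \<and> hd (l # xs) = l \<and> last (l # xs) = y"
    if "is_path V E xs" "hd xs = a" "last xs = y" for xs y
  proof -
    have "is_path ?V ?E (l # xs)"
      using that l is_path_mono[OF that(1)] by (intro is_path_Cons) (auto simp: is_path_def)
    then show ?thesis using that by (simp add: is_path_def)
  qed
  show ?thesis unfolding connected_graph_def
  proof (intro ballI)
    fix x y assume "x \<in> ?V" "y \<in> ?V"
    then consider "x = l" "y = l" | "x = l" "y \<in> V" | "x \<in> V" "y = l" | "x \<in> V" "y \<in> V"
      by auto
    then show "\<exists>xs. is_path ?V ?E xs \<and> hd xs = x \<and> last xs = y"
    proof cases
      case 1
      then show ?thesis by (intro exI[of _ "[l]"]) (simp add: is_path_def)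
    next
      case 2
      then obtain xs where "is_path V E xs" "hd xs = a" "last xs = y"
        using con a unfolding connected_graph_def by blast
      then show ?thesis using 2 from_leaf by blast
    next
      case 3
      then obtain xs where "is_path V E xs" "hd xs = a" "last xs = x"
        using con a unfolding connected_graph_def by blast
      then have path: "is_path ?V ?E (l # xs)" and "last (l # xs) = x"
        using from_leaf by blast+
      then have "hd (rev (l # xs)) = x" "last (rev (l # xs)) = l"
        by (simp_all only: hd_rev last_rev list.sel(1))
      moreover have "is_path ?V ?E (rev (l # xs))" using path by (rule is_path_rev)
      ultimately show ?thesis using 3 by blast
    next
      case 4
      then show ?thesis by (rule old)
    qed
  qed
qed

lemma is_cycle_two_neighbours:
  assumes "is_cycle V E xs" "x \<in> set xs"
  obtains y z where "y \<noteq> z" "{y, x} \<in> E" "{z, x} \<in> E"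
proof -
  let ?n = "length xs"
  obtain k where k: "k < ?n" "xs ! k = x" using assms(2) by (auto simp: in_set_conv_nth)
  have n: "3 \<le> ?n" and closing: "{xs ! (?n - 1), xs ! 0} \<in> E"
    and step: "\<And>i. Suc i < ?n \<Longrightarrow> {xs ! i, xs ! Suc i} \<in> E"
    using assms(1) unfolding is_cycle_def is_path_def by (auto simp: last_conv_nth hd_conv_nth)
  have neq: "xs ! i \<noteq> xs ! j" if "i < ?n" "j < ?n" "i \<noteq> j" for i j
    using assms(1) that unfolding is_cycle_def is_path_def by (simp add: nth_eq_iff_index_eq)
  have pred: "{xs ! (k - 1), x} \<in> E" if "0 < k"
  proof -
    obtain j where "k = Suc j" using \<open>0 < k\<close> gr0_implies_Suc by blast
    then show ?thesis using step[of j] k by simp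
  qed
  have succ: "{xs ! Suc k, x} \<in> E" if "Suc k < ?n"
    using step[OF that] k by (simp add: insert_commute)
  consider "k = 0" | "k = ?n - 1" | "0 < k" "Suc k < ?n" using k by linarith
  then show ?thesis
  proof cases
    case 1
    have "xs ! Suc 0 \<noteq> xs ! (?n - 1)" using n by (intro neq) auto
    moreover have "{xs ! Suc 0, x} \<in> E" using 1 n succ by simp
    moreover have "{xs ! (?n - 1), x} \<in> E" using 1 k closing by simp
    ultimately show ?thesis by (rule that)
  next
    case 2
    have "xs ! (k - 1) \<noteq> xs ! 0" using 2 k n by (intro neq) auto
    moreover have "{xs ! (k - 1), x} \<in> E" using 2 n by (intro pred) simp
    moreover have "{xs ! 0, x} \<in> E" using 2 k closing by (simp add: insert_commute)
    ultimately show ?thesis by (rule that)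
  next
    case 3
    have "xs ! (k - 1) \<noteq> xs ! Suc k" using 3 by (intro neq) auto
    then show ?thesis using pred[OF 3(1)] succ[OF 3(2)] by (rule that)
  qed
qed

lemma no_cycle_add_leaf:
  assumes g: "graph V E" and a: "a \<in> V" and l: "l \<notin> V" and acyclic: "\<not> (\<exists>xs. is_cycle V E xs)"
  shows "\<not> (\<exists>xs. is_cycle (insert l V) (insert {a, l} E) xs)"
proof
  assume "\<exists>xs. is_cycle (insert l V) (insert {a, l} E) xs"
  then obtain xs where cycle: "is_cycle (insert l V) (insert {a, l} E) xs" ..
  have leaf: "y = a" if "{y, l} \<in> insert {a, l} E" for y
  proof -
    have "{y, l} \<notin> E" using g l unfolding graph_def by auto
    then show ?thesis using that a l by (auto simp: doubleton_eq_iff)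
  qed
  show False
  proof (cases "l \<in> set xs")
    case True
    then obtain y z where "y \<noteq> z" "{y, l} \<in> insert {a, l} E" "{z, l} \<in> insert {a, l} E"
      by (rule is_cycle_two_neighbours[OF cycle])
    then show False using leaf by blast
  next
    case False
    moreover have "last xs \<in> set xs" "hd xs \<in> set xs"
      using cycle unfolding is_cycle_def is_path_def by auto
    ultimately have "{last xs, hd xs} \<noteq> {a, l}" by (auto simp: doubleton_eq_iff)
    then have "is_cycle V E xs"
      using cycle is_path_without_leaf[OF _ False] unfolding is_cycle_def by auto
    then show False using acyclic by blast
  qed
qed

lemma tree_add_leaf:
  assumes tree: "tree V E" and a: "a \<in> V" and l: "l \<notin> V"
  shows "tree (insert l V) (insert {a, l} E)"
proof -
  have g: "graph V E" and con: "connected_graph V E" and acyclic: "\<not> (\<exists>xs. is_cycle V E xs)"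
    using tree unfolding tree_def by auto
  have "a \<noteq> l" using a l by auto
  then have "graph (insert l V) (insert {a, l} E)" using g a unfolding graph_def by auto
  moreover have "connected_graph (insert l V) (insert {a, l} E)"
    using con a l by (rule connected_graph_add_leaf)
  moreover have "\<not> (\<exists>xs. is_cycle (insert l V) (insert {a, l} E) xs)"
    using g a l acyclic by (rule no_cycle_add_leaf)
  ultimately show ?thesis unfolding tree_def by blast
qed

lemma tree_add_leaves:
  assumes "tree V E" "finite S" "inj_on l S" "l ` S \<inter> V = {}" "a ` S \<subseteq> V"
  shows "tree (V \<union> l ` S) (E \<union> (\<lambda>v. {a v, l v}) ` S)"
  using assms(2-5)
proof (induction S rule: finite_induct)
  case empty
  show ?case using assms(1) by simp
next
  case (insert x S)
  have "tree (V \<union> l ` S) (E \<union> (\<lambda>v. {a v, l v}) ` S)"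
    using insert.prems by (intro insert.IH) auto
  moreover have "a x \<in> V \<union> l ` S" "l x \<notin> V \<union> l ` S"
    using insert.hyps(2) insert.prems by auto
  ultimately have "tree (insert (l x) (V \<union> l ` S)) (insert {a x, l x} (E \<union> (\<lambda>v. {a v, l v}) ` S))"
    by (rule tree_add_leaf)
  then show ?case by (simp only: image_insert Un_insert_right)
qed

lemma path_graph_induced_subgraph:
  assumes "path_graph V' E'" and f: "inj_on f V" "f ` V \<subseteq> V'"
    and induced: "\<And>u v. u \<in> V \<Longrightarrow> v \<in> V \<Longrightarrow> u \<noteq> v \<Longrightarrow> {u, v} \<in> E \<longleftrightarrow> {f u, f v} \<in> E'"
  shows "path_graph V E"
proof -
  obtain TV TE and \<phi> :: "_ \<Rightarrow> nat set" where tree: "tree TV TE" and inj: "inj_on \<phi> V'"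
    and paths: "\<forall>v\<in>V'. \<exists>ps. is_path TV TE ps \<and> set ps = \<phi> v"
    and adj: "\<forall>u\<in>V'. \<forall>v\<in>V'. u \<noteq> v \<longrightarrow> ({u, v} \<in> E' \<longleftrightarrow> \<phi> u \<inter> \<phi> v \<noteq> {})"
    using assms(1) unfolding path_graph_def by blast
  have "inj_on (\<phi> \<circ> f) V"
    using f inj by (intro comp_inj_on) (auto intro: inj_on_subset)
  moreover have "\<forall>v\<in>V. \<exists>ps. is_path TV TE ps \<and> set ps = (\<phi> \<circ> f) v"
    using paths f by auto
  moreover have "\<forall>u\<in>V. \<forall>v\<in>V. u \<noteq> v \<longrightarrow> ({u, v} \<in> E \<longleftrightarrow> (\<phi> \<circ> f) u \<inter> (\<phi> \<circ> f) v \<noteq> {})"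
  proof (intro ballI impI)
    fix u v assume uv: "u \<in> V" "v \<in> V" "u \<noteq> v"
    then have "f u \<noteq> f v" "f u \<in> V'" "f v \<in> V'" using f by (auto dest: inj_onD)
    then show "{u, v} \<in> E \<longleftrightarrow> (\<phi> \<circ> f) u \<inter> (\<phi> \<circ> f) v \<noteq> {}"
      using adj induced[OF uv] by simp
  qed
  ultimately show ?thesis using tree unfolding path_graph_def by blast
qed

lemma Inl_Inl_in_plus_E: "{Inl u, Inl v} \<in> plus_E V E \<longleftrightarrow> {u, v} \<in> E"
proof -
  have "inj (image Inl)" by (simp add: inj_image_eq_iff inj_def)
  then have "Inl ` {u, v} \<in> image Inl ` E \<longleftrightarrow> {u, v} \<in> E" by (rule inj_image_mem_iff)
  then show ?thesis unfolding plus_E_def by (auto simp: doubleton_eq_iff)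
qed

lemma Inl_Inr_in_plus_E: "{Inl u, Inr v} \<in> plus_E V E \<longleftrightarrow> u = v \<and> v \<in> V"
  unfolding plus_E_def by (auto simp: doubleton_eq_iff)

lemma Inr_Inr_notin_plus_E: "{Inr u, Inr v} \<notin> plus_E V E"
  unfolding plus_E_def by (auto simp: doubleton_eq_iff)

lemma obtain_fresh_nat_labels:
  fixes T :: "nat set"
  assumes "finite T" "finite V"
  obtains l :: "'a \<Rightarrow> nat" where "inj_on l V" "l ` V \<inter> T = {}"
proof -
  obtain f :: "'a \<Rightarrow> nat" where f: "inj_on f V"
    using finite_imp_inj_to_nat_seg[OF assms(2)] by blast
  define l where "l v = Suc (Max T) + f v" for v
  have "inj_on l V" using f unfolding inj_on_def l_def by simp
  moreover have "l v \<notin> T" for v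
  proof
    assume "l v \<in> T"
    then have "l v \<le> Max T" using assms(1) by simp
    then show False unfolding l_def by simp
  qed
  ultimately show ?thesis using that by blast
qed

definition plus_rep :: "('a \<Rightarrow> 'b set) \<Rightarrow> ('a \<Rightarrow> 'b) \<Rightarrow> 'a + 'a \<Rightarrow> 'b set" where
  "plus_rep \<phi> l = case_sum (\<lambda>v. insert (l v) (\<phi> v)) (\<lambda>v. {l v})"

lemma inj_on_plus_rep:
  assumes l: "inj_on l V" and fresh: "\<And>v w. v \<in> V \<Longrightarrow> w \<in> V \<Longrightarrow> l w \<notin> \<phi> v"
    and nonempty: "\<And>v. v \<in> V \<Longrightarrow> \<phi> v \<noteq> {}"
  shows "inj_on (plus_rep \<phi> l) (plus_V V)"
proof (rule inj_onI)
  fix x y assume "x \<in> plus_V V" "y \<in> plus_V V" and eq: "plus_rep \<phi> l x = plus_rep \<phi> l y"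
  then obtain u w where u: "u \<in> V" and w: "w \<in> V"
    and x: "x = Inl u \<or> x = Inr u" and y: "y = Inl w \<or> y = Inr w"
    unfolding plus_V_def by auto
  have "l w \<in> plus_rep \<phi> l y" using y by (auto simp: plus_rep_def)
  then have "l w \<in> plus_rep \<phi> l x" using eq by simp
  then have "l w = l u" using x fresh[OF u w] by (auto simp: plus_rep_def)
  then have "u = w" using l u w by (auto dest: inj_onD)
  moreover have "plus_rep \<phi> l (Inl u) \<noteq> plus_rep \<phi> l (Inr u)"
    using nonempty[OF u] fresh[OF u u] by (auto simp: plus_rep_def)
  ultimately show "x = y" using x y eq by (elim disjE) auto
qed

lemma plus_rep_intersect_iff:
  assumes l: "inj_on l V" and fresh: "\<And>v w. v \<in> V \<Longrightarrow> w \<in> V \<Longrightarrow> l w \<notin> \<phi> v"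
    and adj: "\<And>u v. u \<in> V \<Longrightarrow> v \<in> V \<Longrightarrow> u \<noteq> v \<Longrightarrow> {u, v} \<in> E \<longleftrightarrow> \<phi> u \<inter> \<phi> v \<noteq> {}"
    and "x \<in> plus_V V" "y \<in> plus_V V" "x \<noteq> y"
  shows "{x, y} \<in> plus_E V E \<longleftrightarrow> plus_rep \<phi> l x \<inter> plus_rep \<phi> l y \<noteq> {}"
proof -
  obtain u w where u: "u \<in> V" and w: "w \<in> V"
    and x: "x = Inl u \<or> x = Inr u" and y: "y = Inl w \<or> y = Inr w"
    using assms(4,5) unfolding plus_V_def by auto
  have l_eq: "l u = l w \<longleftrightarrow> u = w" using l u w by (auto dest: inj_onD)
  have leaf_meets: "insert (l u) (\<phi> u) \<inter> {l w} \<noteq> {} \<longleftrightarrow> u = w"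
    "{l u} \<inter> insert (l w) (\<phi> w) \<noteq> {} \<longleftrightarrow> u = w"
    using fresh[OF u w] fresh[OF w u] l_eq by auto
  consider "x = Inl u" "y = Inl w" | "x = Inl u" "y = Inr w" | "x = Inr u" "y = Inl w"
    | "x = Inr u" "y = Inr w"
    using x y by blast
  then show ?thesis
  proof cases
    case 1
    then have "u \<noteq> w" using \<open>x \<noteq> y\<close> by simp
    then have "insert (l u) (\<phi> u) \<inter> insert (l w) (\<phi> w) = \<phi> u \<inter> \<phi> w"
      using fresh[OF u w] fresh[OF w u] l_eq by auto
    then show ?thesis using 1 adj[OF u w \<open>u \<noteq> w\<close>] by (simp add: plus_rep_def Inl_Inl_in_plus_E)
  next
    case 2
    then show ?thesis using w leaf_meets by (simp add: plus_rep_def Inl_Inr_in_plus_E)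
  next
    case 3
    then show ?thesis using u leaf_meets by (auto simp: plus_rep_def insert_commute Inl_Inr_in_plus_E)
  next
    case 4
    then have "u \<noteq> w" using \<open>x \<noteq> y\<close> by simp
    then show ?thesis using 4 l_eq by (simp add: plus_rep_def Inr_Inr_notin_plus_E)
  qed
qed

lemma path_graph_plus:
  assumes finite: "finite V" and "path_graph V E"
  shows "path_graph (plus_V V) (plus_E V E)"
proof -
  obtain TV TE and \<phi> :: "_ \<Rightarrow> nat set" where tree: "tree TV TE"
    and paths: "\<forall>v\<in>V. \<exists>ps. is_path TV TE ps \<and> set ps = \<phi> v"
    and adj: "\<forall>u\<in>V. \<forall>v\<in>V. u \<noteq> v \<longrightarrow> ({u, v} \<in> E \<longleftrightarrow> \<phi> u \<inter> \<phi> v \<noteq> {})"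
    using assms(2) unfolding path_graph_def by blast
  obtain ps where ps: "\<And>v. v \<in> V \<Longrightarrow> is_path TV TE (ps v)" "\<And>v. v \<in> V \<Longrightarrow> set (ps v) = \<phi> v"
    using paths by metis
  have "finite TV" using tree unfolding tree_def graph_def by blast
  then obtain l :: "'a \<Rightarrow> nat" where l: "inj_on l V" "l ` V \<inter> TV = {}"
    using finite by (rule obtain_fresh_nat_labels)
  have path_sets: "\<phi> v \<noteq> {}" "\<phi> v \<subseteq> TV" "hd (ps v) \<in> TV" if "v \<in> V" for v
    using ps[OF that] unfolding is_path_def by auto
  have fresh: "l w \<notin> \<phi> v" if "v \<in> V" "w \<in> V" for v w
    using l(2) path_sets(2)[OF that(1)] that(2) by blast
  define TV' where "TV' = TV \<union> l ` V"
  define TE' where "TE' = TE \<union> (\<lambda>v. {hd (ps v), l v}) ` V"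
  have "tree TV' TE'"
    unfolding TV'_def TE'_def using tree finite l by (rule tree_add_leaves) (use path_sets in auto)
  moreover have "\<exists>qs. is_path TV' TE' qs \<and> set qs = plus_rep \<phi> l x" if xV: "x \<in> plus_V V" for x
  proof -
    obtain v where v: "v \<in> V" and x: "x = Inl v \<or> x = Inr v"
      using xV unfolding plus_V_def by auto
    have "is_path TV' TE' (ps v)" using ps(1)[OF v] by (rule is_path_mono) (auto simp: TV'_def TE'_def)
    moreover have "l v \<notin> set (ps v)" using fresh[OF v v] ps(2)[OF v] by simp
    ultimately have "is_path TV' TE' (l v # ps v)"
      using v by (intro is_path_Cons) (auto simp: TV'_def TE'_def insert_commute)
    moreover have "is_path TV' TE' [l v]" using v by (simp add: is_path_def TV'_def)
    ultimately show ?thesis using x ps(2)[OF v] by (auto simp: plus_rep_def)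
  qed
  moreover have "inj_on (plus_rep \<phi> l) (plus_V V)"
    using l(1) fresh path_sets(1) by (rule inj_on_plus_rep)
  moreover have "{x, y} \<in> plus_E V E \<longleftrightarrow> plus_rep \<phi> l x \<inter> plus_rep \<phi> l y \<noteq> {}"
    if "x \<in> plus_V V" "y \<in> plus_V V" "x \<noteq> y" for x y
    using l(1) fresh adj[rule_format] that by (rule plus_rep_intersect_iff)
  ultimately show ?thesis unfolding path_graph_def by blast
qed

theorem lemma4p2:
  fixes V :: "'a set" and E :: "'a set set"
  assumes "graph V E"
  shows "path_graph V E \<longleftrightarrow> path_graph (plus_V V) (plus_E V E)"
proof
  assume "path_graph V E"
  moreover have "finite V" using assms unfolding graph_def by blast
  ultimately show "path_graph (plus_V V) (plus_E V E)" by (intro path_graph_plus)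
next
  assume "path_graph (plus_V V) (plus_E V E)"
  then show "path_graph V E"
    by (rule path_graph_induced_subgraph[where f = Inl]) (auto simp: plus_V_def Inl_Inl_in_plus_E)
qed

end
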